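(* Let $m,n$ be positive integers and $m\le d\le m+n$. There is a constant $C=C(m,n,d)$ such that for every $E\subset\mathbb{R}^{n+m}$, $$\mathcal{H}^d_\infty(E)\le C(\mathrm{diam}\,E)^m\,\mathcal{H}^{d-m}_\infty(\pi(E)),$$ where $\pi:\mathbb{R}^{n+m}\to\mathbb{R}^n$, $\pi(x,x_{n+1},\dots,x_{n+m})=x$.
   Context: For $q\ge0$, the $q$-dimensional Hausdorff content $\mathcal{H}^q_\infty(E)$ is the infimum of $\sum_j\boldsymbol\alpha_q(\mathrm{diam}\,E_j/2)^q$ over all countable coverings $\{E_j\}$ of $E$, where $\boldsymbol\alpha_q=\pi^{q/2}/\Gamma(\frac q2+1)$. *)

theory Defs
  imports "HOL-Analysis.Analysis"
begin

definition hc_alpha :: "real \<Rightarrow> real" where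
  "hc_alpha q = pi powr (q / 2) / Gamma (q / 2 + 1)"

definition ediam :: "'a::metric_space set \<Rightarrow> ennreal" where
  "ediam S = (if bounded S then ennreal (diameter S) else \<infinity>)"

definition hc_term :: "real \<Rightarrow> 'a::metric_space set \<Rightarrow> ennreal" where
  "hc_term q S =
     (if S = {} then 0
      else if bounded S then
        ennreal (hc_alpha q * (if q = 0 then 1 else (diameter S / 2) powr q))
      else \<infinity>)"

definition hausdorff_content :: "real \<Rightarrow> 'a::metric_space set \<Rightarrow> ennreal" where
  "hausdorff_content q E =
     (INF F \<in> {F :: nat \<Rightarrow> 'a set. E \<subseteq> (\<Union>j. F j)}. \<Sum>j. hc_term q (F j))"

end

theory Submission
  imports Defs
begin

text \<open>
  Write \<open>m = CARD('m)\<close> and \<open>s = d - m\<close>. If \<open>A\<close> has diameter \<open>t \<le> R\<close> and \<open>B\<close> lies in a ball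
  of radius \<open>R\<close> in \<open>\<real>^m\<close>, then chopping the ball into about \<open>(R/t)^m\<close> grid cubes of side \<open>t\<close>
  covers \<open>A \<times> B\<close> by sets of diameter \<open>O(t)\<close>, so \<open>H^d(A \<times> B) \<lesssim> R^m t^s\<close>. Given a covering
  \<open>F\<^sub>j\<close> of \<open>\<pi>(E)\<close>, the set \<open>E\<close> lies in the union of the products \<open>(F\<^sub>j \<inter> \<pi>(E)) \<times> snd(E)\<close>,
  and with \<open>R = diam E\<close> this gives \<open>H^d(E) \<lesssim> (diam E)^m \<Sum>\<^sub>j (diam F\<^sub>j)^s\<close>;
  taking the infimum over coverings proves the claim for bounded \<open>E\<close>. For unbounded \<open>E\<close> the
  right-hand side is infinite unless \<open>H^s(\<pi>(E)) = 0\<close>, and then coverings of \<open>\<pi>(E)\<close> by small sets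
  show that every slice of \<open>E\<close> over a ball in \<open>\<real>^m\<close> is \<open>H^d\<close>-null. For \<open>s = 0\<close> the claim is
  just \<open>H^m(E) \<le> \<alpha>\<^sub>m (diam E / 2)^m\<close> together with \<open>H^0 \<ge> 1\<close> on nonempty sets.
\<close>

lemma ennreal_eq_0_if_le_powr:
  fixes x :: ennreal
  assumes "0 < R" "0 < s" "0 \<le> c"
    and le: "\<And>t. 0 < t \<Longrightarrow> t \<le> R \<Longrightarrow> x \<le> ennreal (c * t powr s)"
  shows "x = 0"
proof -
  have "x \<le> 0 + ennreal e" if "0 < e" for e
  proof -
    define t where "t = min R ((e / (c + 1)) powr (1 / s))"
    have "0 < t" using assms that by (simp add: t_def)
    have "t powr s \<le> ((e / (c + 1)) powr (1 / s)) powr s"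
      using \<open>0 < t\<close> assms by (intro powr_mono2) (auto simp: t_def)
    also have "\<dots> = e / (c + 1)" using assms that by (simp add: powr_powr)
    finally have "c * t powr s \<le> c * (e / (c + 1))" using assms by (intro mult_left_mono) auto
    also have "\<dots> \<le> e" using assms that by (simp add: field_simps)
    finally show ?thesis
      using le[OF \<open>0 < t\<close>] by (simp add: t_def order_trans ennreal_leI)
  qed
  then show ?thesis by (metis ennreal_le_epsilon le_zero_eq)
qed

lemma ennreal_mult_INF:
  fixes c :: ennreal
  assumes "c < top" "S \<noteq> {}"
  shows "c * (INF x\<in>S. f x) = (INF x\<in>S. c * f x)"
proof -
  have "continuous_on UNIV ((*) c)"
    using ennreal_continuous_on_cmult[OF assms(1) continuous_on_id] by simp
  then have "continuous (at_right (Inf (f ` S))) ((*) c)"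
    by (simp add: continuous_on_eq_continuous_at continuous_at_imp_continuous_at_within)
  then show ?thesis
    using continuous_at_Inf_mono[of "(*) c" "f ` S"] assms
    by (simp add: mono_def mult_left_mono image_image)
qed

lemma diameter_le_dist:
  fixes S :: "'a::metric_space set"
  assumes "0 \<le> r" "\<And>x y. x \<in> S \<Longrightarrow> y \<in> S \<Longrightarrow> dist x y \<le> r"
  shows "diameter S \<le> r"
  using assms unfolding diameter_def by (auto intro: cSUP_least)

lemma diameter_Times_le:
  fixes A :: "'a::metric_space set" and B :: "'b::metric_space set"
  assumes "bounded A" "bounded B"
  shows "diameter (A \<times> B) \<le> diameter A + diameter B"
proof (rule diameter_le_dist)
  show "0 \<le> diameter A + diameter B" using assms by (simp add: diameter_ge_0 add_nonneg_nonneg)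
  fix p q assume "p \<in> A \<times> B" "q \<in> A \<times> B"
  then have "dist (fst p) (fst q) \<le> diameter A" "dist (snd p) (snd q) \<le> diameter B"
    using assms by (auto intro: diameter_bounded_bound)
  moreover have "dist p q \<le> dist (fst p) (fst q) + dist (snd p) (snd q)"
    by (cases p, cases q) (simp add: dist_Pair_Pair sqrt_sum_squares_le_sum)
  ultimately show "dist p q \<le> diameter A + diameter B" by linarith
qed

lemma diameter_fst_image_le:
  fixes E :: "('a::metric_space \<times> 'b::metric_space) set"
  assumes "bounded E"
  shows "diameter (fst ` E) \<le> diameter E"
proof (rule diameter_le_dist)
  show "0 \<le> diameter E" using assms by (rule diameter_ge_0)
  fix x y assume "x \<in> fst ` E" "y \<in> fst ` E"
  then obtain p q where "p \<in> E" "q \<in> E" "x = fst p" "y = fst q" by blast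
  then show "dist x y \<le> diameter E"
    using dist_fst_le[of p q] diameter_bounded_bound[OF assms] by (metis order_trans)
qed

lemma snd_image_subset_cball_diameter:
  fixes E :: "('a::metric_space \<times> 'b::metric_space) set"
  assumes "bounded E" "p \<in> E"
  shows "snd ` E \<subseteq> cball (snd p) (diameter E)"
proof
  fix z assume "z \<in> snd ` E"
  then obtain q where "q \<in> E" "z = snd q" by blast
  then show "z \<in> cball (snd p) (diameter E)"
    using assms dist_snd_le[of p q] diameter_bounded_bound[OF assms(1)] by (metis mem_cball order_trans)
qed

section \<open>Hausdorff content\<close>

lemma hc_alpha_pos: "0 \<le> q \<Longrightarrow> 0 < hc_alpha q"
  unfolding hc_alpha_def by (intro divide_pos_pos) auto

lemma hc_alpha_0 [simp]: "hc_alpha 0 = 1"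
  by (simp add: hc_alpha_def)

lemma hc_term_empty [simp]: "hc_term q {} = 0"
  by (simp add: hc_term_def)

lemma hc_term_le_diameter:
  assumes "0 < q" "bounded S" "diameter S \<le> r"
  shows "hc_term q S \<le> ennreal (hc_alpha q * (r / 2) powr q)"
proof (cases "S = {}")
  case False
  have "(diameter S / 2) powr q \<le> (r / 2) powr q"
    using assms diameter_ge_0[OF assms(2)] by (intro powr_mono2) auto
  then show ?thesis
    using False assms hc_alpha_pos[of q] by (auto simp: hc_term_def intro!: ennreal_leI)
qed simp

lemma hc_term_less_imp_diameter_less:
  assumes "0 < q" "0 < r" and less: "hc_term q S < ennreal (hc_alpha q * (r / 2) powr q)"
  shows "bounded S \<and> diameter S < r"
proof (cases "S = {}")
  case False
  then have bounded: "bounded S" using less by (auto simp: hc_term_def split: if_splits)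
  have "0 \<le> hc_alpha q * (diameter S / 2) powr q"
    using hc_alpha_pos[of q] assms(1) by simp
  with False bounded less assms(1) have "hc_alpha q * (diameter S / 2) powr q < hc_alpha q * (r / 2) powr q"
    by (simp add: hc_term_def ennreal_less_iff)
  then have "(diameter S / 2) powr q < (r / 2) powr q"
    using hc_alpha_pos[of q] assms(1) by simp
  then have "diameter S / 2 < r / 2"
    using assms diameter_ge_0[OF bounded] by (meson not_le powr_mono2 less_imp_le half_gt_zero)
  with bounded show ?thesis by simp
qed (use assms in simp)

lemma hausdorff_content_le_suminf:
  "S \<subseteq> (\<Union>j. F j) \<Longrightarrow> hausdorff_content q S \<le> (\<Sum>j. hc_term q (F j))"
  unfolding hausdorff_content_def by (intro INF_lower) auto

lemma hausdorff_content_less_imp_cover: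
  assumes "hausdorff_content q S < c"
  obtains F where "S \<subseteq> (\<Union>j. F j)" "(\<Sum>j. hc_term q (F j)) < c"
  using assms unfolding hausdorff_content_def INF_less_iff by auto

lemma hausdorff_content_le_hc_term: "hausdorff_content q S \<le> hc_term q S"
proof -
  have "hausdorff_content q S \<le> (\<Sum>j. hc_term q (if j = 0 then S else {}))"
    by (rule hausdorff_content_le_suminf) auto
  also have "\<dots> = hc_term q S"
    by (subst suminf_finite[of "{0}"]) auto
  finally show ?thesis .
qed

lemma hausdorff_content_empty [simp]: "hausdorff_content q {} = 0"
  using hausdorff_content_le_hc_term[of q "{}"] by simp

lemma hausdorff_content_eq_0_if_diameter_eq_0:
  assumes "0 < q" "bounded S" "diameter S = 0"
  shows "hausdorff_content q S = 0"
proof -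
  have "hc_term q S = 0"
    using assms by (simp add: hc_term_def)
  then show ?thesis
    using hausdorff_content_le_hc_term[of q S] by simp
qed

lemma le_mult_hausdorff_content:
  assumes "\<And>F. S \<subseteq> (\<Union>j. F j) \<Longrightarrow> x \<le> ennreal c * (\<Sum>j. hc_term q (F j))"
  shows "x \<le> ennreal c * hausdorff_content q S"
proof -
  define covers where "covers = {F. S \<subseteq> (\<Union>j::nat. F j)}"
  have "(\<lambda>_. UNIV) \<in> covers" by (simp add: covers_def)
  then have "covers \<noteq> {}" by blast
  have "x \<le> (INF F\<in>covers. ennreal c * (\<Sum>j. hc_term q (F j)))"
    using assms by (intro INF_greatest) (simp add: covers_def)
  also have "\<dots> = ennreal c * hausdorff_content q S"
    unfolding hausdorff_content_def covers_def[symmetric]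
    by (rule ennreal_mult_INF[OF ennreal_less_top \<open>covers \<noteq> {}\<close>, symmetric])
  finally show ?thesis .
qed

lemma hausdorff_content_mono:
  "A \<subseteq> B \<Longrightarrow> hausdorff_content q A \<le> hausdorff_content q B"
  unfolding hausdorff_content_def by (intro INF_superset_mono) auto

lemma hausdorff_content_le_sum:
  assumes "finite I" "S \<subseteq> (\<Union>k\<in>I. T k)"
  shows "hausdorff_content q S \<le> (\<Sum>k\<in>I. hc_term q (T k))"
proof -
  obtain xs where xs: "set xs = I" "distinct xs"
    using finite_distinct_list[OF assms(1)] by blast
  define F where "F n = (if n < length xs then T (xs ! n) else {})" for n
  have "S \<subseteq> (\<Union>n. F n)"
    using assms(2) unfolding F_def xs(1)[symmetric] by (fastforce simp: in_set_conv_nth)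
  then have "hausdorff_content q S \<le> (\<Sum>n. hc_term q (F n))"
    by (rule hausdorff_content_le_suminf)
  also have "\<dots> = (\<Sum>n<length xs. hc_term q (T (xs ! n)))"
    by (subst suminf_finite[of "{..<length xs}"]) (auto simp: F_def)
  also have "\<dots> = (\<Sum>k\<in>I. hc_term q (T k))"
    using sum.reindex_bij_betw[OF bij_betw_nth[OF xs(2) refl xs(1)[symmetric]]] by simp
  finally show ?thesis .
qed

lemma hausdorff_content_countable_subadditive:
  assumes S: "S \<subseteq> (\<Union>i. A i)"
  shows "hausdorff_content q S \<le> (\<Sum>i. hausdorff_content q (A i))"
proof (rule ennreal_le_epsilon)
  fix e :: real
  assume finite_sum: "(\<Sum>i. hausdorff_content q (A i)) < top" and "0 < e"
  define eps where "eps i = e * (1/2) ^ Suc i" for i :: nat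
  have eps_pos: "0 < eps i" for i
    using \<open>0 < e\<close> by (simp add: eps_def)
  have less: "hausdorff_content q (A i) < hausdorff_content q (A i) + ennreal (eps i)" for i
    using ennreal_suminf_lessD[OF finite_sum, of i] eps_pos[of i]
    by (cases "hausdorff_content q (A i)") (auto simp flip: ennreal_plus intro!: ennreal_lessI)
  have "\<exists>G. A i \<subseteq> (\<Union>j. G j) \<and>
      (\<Sum>j. hc_term q (G j)) < hausdorff_content q (A i) + ennreal (eps i)" for i
    using hausdorff_content_less_imp_cover[OF less[of i]] by blast
  then obtain G where G: "\<And>i. A i \<subseteq> (\<Union>j. G i j)"
    "\<And>i. (\<Sum>j. hc_term q (G i j)) < hausdorff_content q (A i) + ennreal (eps i)"
    by metis
  have "S \<subseteq> (\<Union>n. case_prod G (prod_decode n))"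
    using S G(1) by (fastforce intro: exI[of _ "prod_encode _"])
  then have "hausdorff_content q S \<le> (\<Sum>n. hc_term q (case_prod G (prod_decode n)))"
    by (rule hausdorff_content_le_suminf)
  also have "\<dots> = (\<Sum>i. \<Sum>j. hc_term q (G i j))"
    using suminf_ennreal_2dimen[of "\<lambda>i. \<Sum>j. hc_term q (G i j)" "\<lambda>(i, j). hc_term q (G i j)"]
    by (simp add: case_prod_beta prod.case_eq_if)
  also have "\<dots> \<le> (\<Sum>i. hausdorff_content q (A i) + ennreal (eps i))"
    by (intro suminf_le) (auto intro: less_imp_le G(2))
  also have "\<dots> = (\<Sum>i. hausdorff_content q (A i)) + (\<Sum>i. ennreal (eps i))"
    by (rule suminf_add[symmetric]) auto
  also have "(\<Sum>i. ennreal (eps i)) = ennreal e"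
  proof -
    have "eps sums (e * 1)"
      unfolding eps_def by (intro sums_mult power_half_series)
    then show ?thesis
      using eps_pos by (subst suminf_ennreal2) (auto simp: sums_iff less_imp_le)
  qed
  finally show "hausdorff_content q S \<le> (\<Sum>i. hausdorff_content q (A i)) + ennreal e" .
qed

lemma one_le_hausdorff_content_0:
  assumes "S \<noteq> {}"
  shows "1 \<le> hausdorff_content 0 S"
  unfolding hausdorff_content_def
proof (rule INF_greatest)
  fix F :: "nat \<Rightarrow> _"
  assume "F \<in> {F. S \<subseteq> (\<Union>j. F j)}"
  then obtain j where "F j \<noteq> {}" using assms by blast
  then have "1 \<le> hc_term 0 (F j)" by (simp add: hc_term_def)
  also have "\<dots> \<le> (\<Sum>i. hc_term 0 (F i))"
    using sum_le_suminf[of "\<lambda>i. hc_term 0 (F i)" "{j}"] by auto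
  finally show "1 \<le> (\<Sum>i. hc_term 0 (F i))" .
qed

lemma hausdorff_content_le_ediam_pow:
  fixes E :: "'a::metric_space set"
  assumes "0 < n"
  shows "hausdorff_content (real n) E \<le> ennreal (hc_alpha n / 2 ^ n) * ediam E ^ n"
proof (cases "bounded E")
  case True
  have "hausdorff_content (real n) E \<le> hc_term n E"
    by (rule hausdorff_content_le_hc_term)
  also have "\<dots> \<le> ennreal (hc_alpha n / 2 ^ n * diameter E ^ n)"
  proof -
    have "(diameter E / 2) powr n = (diameter E / 2) ^ n"
      using diameter_ge_0[OF True] assms by (cases "diameter E = 0") (simp_all add: powr_realpow)
    then show ?thesis
      using True assms by (simp add: hc_term_def power_divide)
  qed
  also have "\<dots> = ennreal (hc_alpha n / 2 ^ n) * ediam E ^ n"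
    using True diameter_ge_0[OF True] hc_alpha_pos[of n]
    by (simp add: ediam_def ennreal_power flip: ennreal_mult)
  finally show ?thesis .
next
  case False
  then show ?thesis
    using assms hc_alpha_pos[of n] by (simp add: ediam_def ennreal_mult_top)
qed

section \<open>Products with subsets of a ball in \<open>\<real>^m\<close>\<close>

lemma clamped_floor_bounds:
  fixes u :: real
  assumes "0 \<le> u" "u \<le> N" "0 < N"
  shows "real (min (N - 1) (nat \<lfloor>u\<rfloor>)) \<le> u \<and> u \<le> real (min (N - 1) (nat \<lfloor>u\<rfloor>)) + 1"
proof (cases "nat \<lfloor>u\<rfloor> \<le> N - 1")
  case True
  then show ?thesis using assms(1) by simp
next
  case False
  then have "N - 1 \<le> u" by linarith
  then show ?thesis using False assms(2,3) by (simp add: of_nat_diff)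
qed

lemma cball_subset_grid_cubes:
  fixes b :: "real ^ 'm::finite"
  assumes "0 < R" "0 < N"
  obtains I :: "('m \<Rightarrow> nat) set" and Q :: "('m \<Rightarrow> nat) \<Rightarrow> (real ^ 'm) set"
  where "finite I" "card I = N ^ CARD('m)" "cball b R \<subseteq> (\<Union>k\<in>I. Q k)"
    "\<And>k y z. y \<in> Q k \<Longrightarrow> z \<in> Q k \<Longrightarrow> dist y z \<le> real CARD('m) * (2 * R / N)"
proof
  define h where "h = 2 * R / N"
  have "0 < h" using assms by (simp add: h_def)
  define I where "I = PiE UNIV (\<lambda>_::'m. {..<N})"
  define Q where "Q k = {y :: real ^ 'm. \<forall>i.
      b$i - R + h * k i \<le> y$i \<and> y$i \<le> b$i - R + h * (k i + 1)}" for k :: "'m \<Rightarrow> nat"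
  show "finite I" "card I = N ^ CARD('m)"
    by (simp_all add: I_def finite_PiE card_PiE)
  show "cball b R \<subseteq> (\<Union>k\<in>I. Q k)"
  proof
    fix y assume y: "y \<in> cball b R"
    define u where "u i = (y$i - b$i + R) / h" for i
    \<comment> \<open>clamped, since \<open>u i = N\<close> on the upper face of the bounding box of the ball\<close>
    define k where "k i = min (N - 1) (nat \<lfloor>u i\<rfloor>)" for i
    have "k \<in> I" using assms by (auto simp: I_def k_def)
    moreover have "y \<in> Q k"
      unfolding Q_def
    proof (intro CollectI allI)
      fix i
      have "\<bar>y$i - b$i\<bar> \<le> R"
        using component_le_norm_cart[of "y - b" i] y by (simp add: dist_norm norm_minus_commute)
      moreover have "N * h = 2 * R" using assms by (simp add: h_def)
      ultimately have "0 \<le> u i" "u i \<le> N"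
        using \<open>0 < h\<close> by (auto simp: u_def divide_le_eq)
      then have "real (k i) \<le> u i \<and> u i \<le> real (k i) + 1"
        unfolding k_def using assms(2) by (rule clamped_floor_bounds)
      moreover have "y$i = b$i - R + h * u i" using \<open>0 < h\<close> by (simp add: u_def)
      ultimately show "b$i - R + h * k i \<le> y$i \<and> y$i \<le> b$i - R + h * (k i + 1)"
        using \<open>0 < h\<close> by simp
    qed
    ultimately show "y \<in> (\<Union>k\<in>I. Q k)" by blast
  qed
  fix k y z assume "y \<in> Q k" "z \<in> Q k"
  then have side: "\<bar>(y - z)$i\<bar> \<le> h" for i
    unfolding Q_def by (auto simp: abs_le_iff distrib_left dest!: spec[of _ i])
  have "dist y z \<le> (\<Sum>i\<in>UNIV. \<bar>(y - z)$i\<bar>)"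
    unfolding dist_norm by (rule norm_le_l1_cart)
  also have "\<dots> \<le> (\<Sum>i\<in>(UNIV::'m set). h)"
    using side by (intro sum_mono)
  finally show "dist y z \<le> real CARD('m) * (2 * R / N)" by (simp add: h_def)
qed

text \<open>At scale \<open>t\<close>, at most \<open>(2R/t)^m\<close> grid cubes are needed, each giving a piece of diameter
  at most \<open>(1 + 2m) t\<close>.\<close>

definition product_const :: "real \<Rightarrow> nat \<Rightarrow> real" where
  "product_const d m = hc_alpha d * 2 ^ m * ((1 + 2 * real m) / 2) powr d"

lemma product_const_pos: "0 \<le> d \<Longrightarrow> 0 < product_const d m"
  unfolding product_const_def using hc_alpha_pos by simp

lemma hausdorff_content_Times_cball_le_grid:
  fixes A :: "'a::metric_space set" and b :: "real ^ 'm::finite"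
  assumes "bounded A" "diameter A \<le> t" "B \<subseteq> cball b R" "0 < R" "0 < N" "R \<le> N * t" "0 < d"
  shows "hausdorff_content d (A \<times> B)
    \<le> ennreal (real N ^ CARD('m) * (hc_alpha d * ((1 + 2 * real CARD('m)) * t / 2) powr d))"
proof -
  define m where "m = CARD('m)"
  define c where "c = hc_alpha d * ((1 + 2 * real m) * t / 2) powr d"
  obtain I :: "('m \<Rightarrow> nat) set" and Q where I: "finite I" "card I = N ^ m"
    and cover: "cball b R \<subseteq> (\<Union>k\<in>I. Q k)"
    and Q: "\<And>k y z. y \<in> Q k \<Longrightarrow> z \<in> Q k \<Longrightarrow> dist y z \<le> real m * (2 * R / N)"
    using cball_subset_grid_cubes[OF \<open>0 < R\<close> \<open>0 < N\<close>, of b] unfolding m_def by blast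
  have "hc_term d (A \<times> (B \<inter> Q k)) \<le> ennreal c" for k
  proof -
    have "bounded (B \<inter> Q k)"
      using assms by (auto intro: bounded_subset[OF bounded_cball])
    have "diameter (B \<inter> Q k) \<le> real m * (2 * R / N)"
      using Q \<open>0 < R\<close> by (intro diameter_le_dist) auto
    also have "\<dots> \<le> real m * (2 * t)"
      using assms by (intro mult_left_mono) (auto simp: field_simps)
    finally have "diameter (A \<times> (B \<inter> Q k)) \<le> (1 + 2 * real m) * t"
      using diameter_Times_le[OF \<open>bounded A\<close> \<open>bounded (B \<inter> Q k)\<close>] assms(2)
      by (simp add: algebra_simps)
    moreover have "bounded (A \<times> (B \<inter> Q k))"
      using assms \<open>bounded (B \<inter> Q k)\<close> by (intro bounded_Times)
    ultimately show ?thesis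
      unfolding c_def using assms by (intro hc_term_le_diameter)
  qed
  moreover have "A \<times> B \<subseteq> (\<Union>k\<in>I. A \<times> (B \<inter> Q k))"
    using assms cover by blast
  then have "hausdorff_content d (A \<times> B) \<le> (\<Sum>k\<in>I. hc_term d (A \<times> (B \<inter> Q k)))"
    by (rule hausdorff_content_le_sum[OF I(1)])
  ultimately have "hausdorff_content d (A \<times> B) \<le> (\<Sum>k\<in>I. ennreal c)"
    by (meson order_trans sum_mono)
  also have "\<dots> = ennreal (real N ^ m * c)"
    using I hc_alpha_pos[of d] assms by (simp add: c_def ennreal_of_nat_eq_real_of_nat ennreal_mult)
  finally show ?thesis by (simp add: c_def m_def)
qed

lemma hausdorff_content_Times_cball_le:
  fixes A :: "'a::metric_space set" and b :: "real ^ 'm::finite"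
  assumes "bounded A" "diameter A \<le> t" "0 < t" "t \<le> R" "B \<subseteq> cball b R" "0 < d"
  shows "hausdorff_content d (A \<times> B)
    \<le> ennreal (product_const d CARD('m) * R ^ CARD('m) * t powr (d - CARD('m)))"
proof -
  define m where "m = CARD('m)"
  define N where "N = nat \<lceil>R / t\<rceil>"
  have "R / t \<le> N" "0 < N" using assms by (auto simp: N_def)
  then have "R \<le> N * t" using assms by (simp add: field_simps)
  have "N < R / t + 1" using ceiling_correct[of "R / t"] \<open>0 < N\<close> by (simp add: N_def)
  then have "N \<le> 2 * R / t" using assms by (simp add: field_simps)
  define c where "c = hc_alpha d * ((1 + 2 * real m) * t / 2) powr d"
  have "hausdorff_content d (A \<times> B) \<le> ennreal (real N ^ m * c)"
    using hausdorff_content_Times_cball_le_grid[OF assms(1,2,5) _ \<open>0 < N\<close> \<open>R \<le> N * t\<close> assms(6)] assms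
    by (simp add: c_def m_def)
  also have "real N ^ m * c \<le> (2 * R / t) ^ m * c"
  proof (rule mult_right_mono)
    show "real N ^ m \<le> (2 * R / t) ^ m" using \<open>N \<le> 2 * R / t\<close> by (intro power_mono) auto
    show "0 \<le> c" using hc_alpha_pos[of d] assms by (simp add: c_def)
  qed
  also have "\<dots> = product_const d m * R ^ m * (t powr d / t ^ m)"
  proof -
    have "((1 + 2 * real m) * t / 2) powr d = ((1 + 2 * real m) / 2) powr d * t powr d"
      using assms by (subst powr_mult[symmetric]) (auto simp: field_simps)
    then show ?thesis
      using assms by (simp add: c_def product_const_def power_divide field_simps)
  qed
  also have "t powr d / t ^ m = t powr (d - m)"
    using assms by (simp add: powr_diff powr_realpow)
  finally show ?thesis by (simp add: m_def ennreal_leI order_trans)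
qed

lemma hausdorff_content_Times_cball_le_diameter:
  fixes A :: "'a::metric_space set" and b :: "real ^ 'm::finite"
  assumes "bounded A" "diameter A \<le> R" "0 < R" "B \<subseteq> cball b R" "real CARD('m) < d"
  shows "hausdorff_content d (A \<times> B)
    \<le> ennreal (product_const d CARD('m) * R ^ CARD('m) * diameter A powr (d - CARD('m)))"
proof (cases "0 < diameter A")
  case True
  then show ?thesis
    using assms hausdorff_content_Times_cball_le[of A "diameter A" R B b d] by simp
next
  case False
  have "0 < d" using assms(5) by (meson less_trans of_nat_0_less_iff zero_less_card_finite)
  then have "hausdorff_content d (A \<times> B) = 0"
    using assms False hausdorff_content_Times_cball_le[of A _ R B b d]
    by (intro ennreal_eq_0_if_le_powr[of R "d - CARD('m)" "product_const d CARD('m) * R ^ CARD('m)"])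
       (auto simp: product_const_pos less_imp_le)
  then show ?thesis by simp
qed

text \<open>The factor \<open>2^(d-m) / \<alpha>\<^bsub>d-m\<^esub>\<close> turns \<open>(diam F)^(d-m)\<close> into \<open>hc_term (d - m) F\<close>.\<close>

definition projection_const :: "real \<Rightarrow> nat \<Rightarrow> real" where
  "projection_const d m = product_const d m * 2 powr (d - m) / hc_alpha (d - m)"

lemma projection_const_pos: "real m < d \<Longrightarrow> 0 < projection_const d m"
  unfolding projection_const_def using product_const_pos hc_alpha_pos by simp

lemma hausdorff_content_Times_cball_le_hc_term:
  fixes A :: "'a::metric_space set" and b :: "real ^ 'm::finite"
  assumes "A \<subseteq> F" "bounded A \<Longrightarrow> diameter A \<le> R" "0 < R" "B \<subseteq> cball b R"
    and "real CARD('m) < d"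
  shows "hausdorff_content d (A \<times> B)
    \<le> ennreal (projection_const d CARD('m) * R ^ CARD('m)) * hc_term (d - CARD('m)) F"
proof -
  define m where "m = CARD('m)"
  define s where "s = d - m"
  have "0 < s" "0 < projection_const d m"
    using assms projection_const_pos by (simp_all add: s_def m_def)
  then have "0 < projection_const d m * R ^ m" using assms by simp
  consider "A = {}" | "A \<noteq> {}" "\<not> bounded F" | "A \<noteq> {}" "bounded F" by blast
  then show ?thesis
  proof cases
    case 2
    then have "hc_term s F = \<infinity>" using assms(1) by (auto simp: hc_term_def)
    then show ?thesis
      using \<open>0 < projection_const d m\<close> assms(3) by (simp add: s_def m_def ennreal_mult_top)
  next
    case 3
    then have "bounded A" using assms(1) bounded_subset by blast
    then have "diameter A \<le> diameter F" "0 \<le> diameter A"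
      using assms 3 by (auto intro: diameter_subset diameter_ge_0)
    have "hausdorff_content d (A \<times> B) \<le> ennreal (product_const d m * R ^ m * diameter A powr s)"
      using hausdorff_content_Times_cball_le_diameter[OF \<open>bounded A\<close> _ assms(3,4,5)] assms(2)
        \<open>bounded A\<close> by (simp add: m_def s_def)
    also have "\<dots> \<le> ennreal (product_const d m * R ^ m * diameter F powr s)"
      using \<open>diameter A \<le> diameter F\<close> \<open>0 \<le> diameter A\<close> \<open>0 < s\<close> assms product_const_pos[of d m]
      by (intro ennreal_leI mult_left_mono powr_mono2) (auto simp: m_def)
    also have "\<dots> = ennreal (projection_const d m * R ^ m) * hc_term s F"
      using 3 \<open>0 < s\<close> \<open>0 \<le> diameter A\<close> \<open>diameter A \<le> diameter F\<close> hc_alpha_pos[of s]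
        \<open>0 < projection_const d m * R ^ m\<close>
      by (simp add: hc_term_def projection_const_def s_def powr_divide ennreal_mult[symmetric] mult.assoc)
    finally show ?thesis by (simp add: m_def s_def)
  qed simp
qed

section \<open>Coverings of the projection\<close>

lemma hausdorff_content_le_fst_cover:
  fixes E :: "('a::metric_space \<times> (real ^ 'm::finite)) set"
  assumes "snd ` E \<subseteq> cball b R" "0 < R" "fst ` E \<subseteq> (\<Union>j. F j)"
    and "\<And>j. bounded (F j \<inter> fst ` E) \<Longrightarrow> diameter (F j \<inter> fst ` E) \<le> R"
    and "real CARD('m) < d"
  shows "hausdorff_content d E
    \<le> ennreal (projection_const d CARD('m) * R ^ CARD('m)) * (\<Sum>j. hc_term (d - CARD('m)) (F j))"
proof -
  have "E \<subseteq> (\<Union>j. (F j \<inter> fst ` E) \<times> snd ` E)"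
    using assms(3) by force
  then have "hausdorff_content d E \<le> (\<Sum>j. hausdorff_content d ((F j \<inter> fst ` E) \<times> snd ` E))"
    by (rule hausdorff_content_countable_subadditive)
  also have "\<dots> \<le> (\<Sum>j. ennreal (projection_const d CARD('m) * R ^ CARD('m)) * hc_term (d - CARD('m)) (F j))"
    using assms by (intro suminf_le hausdorff_content_Times_cball_le_hc_term) auto
  finally show ?thesis by simp
qed

lemma hausdorff_content_le_diameter_pow_fst:
  fixes E :: "('a::metric_space \<times> (real ^ 'm::finite)) set"
  assumes "bounded E" "real CARD('m) < d"
  shows "hausdorff_content d E
    \<le> ennreal (projection_const d CARD('m) * diameter E ^ CARD('m))
      * hausdorff_content (d - CARD('m)) (fst ` E)"
proof (cases "diameter E = 0")
  case True
  have "0 < d" using assms(2) by (meson less_trans of_nat_0_less_iff zero_less_card_finite)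
  with assms(1) True show ?thesis
    by (simp add: hausdorff_content_eq_0_if_diameter_eq_0)
next
  case False
  then have "0 < diameter E" "E \<noteq> {}"
    using diameter_ge_0[OF assms(1)] by auto
  then obtain p where "p \<in> E" by blast
  have "snd ` E \<subseteq> cball (snd p) (diameter E)"
    using assms(1) \<open>p \<in> E\<close> by (rule snd_image_subset_cball_diameter)
  show ?thesis
  proof (rule le_mult_hausdorff_content)
    fix F :: "nat \<Rightarrow> 'a set" assume "fst ` E \<subseteq> (\<Union>j. F j)"
    then show "hausdorff_content d E \<le> ennreal (projection_const d CARD('m) * diameter E ^ CARD('m))
        * (\<Sum>j. hc_term (d - CARD('m)) (F j))"
    proof (rule hausdorff_content_le_fst_cover[OF \<open>snd ` E \<subseteq> _\<close> \<open>0 < diameter E\<close> _ _ assms(2)])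
      fix j
      have "diameter (F j \<inter> fst ` E) \<le> diameter (fst ` E)"
        using bounded_fst[OF assms(1)] by (intro diameter_subset) auto
      also have "\<dots> \<le> diameter E" using assms(1) by (rule diameter_fst_image_le)
      finally show "diameter (F j \<inter> fst ` E) \<le> diameter E" .
    qed
  qed
qed

lemma hausdorff_content_eq_0_if_fst_cball:
  fixes E :: "('a::metric_space \<times> (real ^ 'm::finite)) set"
  assumes "real CARD('m) < d" "hausdorff_content (d - CARD('m)) (fst ` E) = 0"
    and "snd ` E \<subseteq> cball b R" "0 < R"
  shows "hausdorff_content d E = 0"
proof -
  define m where "m = CARD('m)"
  define s where "s = d - m"
  define c where "c = projection_const d m * R ^ m"
  have "0 < s" "0 < c"
    using assms projection_const_pos by (simp_all add: s_def c_def m_def)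
  have "hausdorff_content d E \<le> 0 + ennreal e" if "0 < e" for e
  proof -
    \<comment> \<open>the second bound forces every covering set to have diameter below \<open>R\<close>\<close>
    define \<delta> where "\<delta> = min (e / c) (hc_alpha s * (R / 2) powr s)"
    have "0 < \<delta>"
      using \<open>0 < c\<close> \<open>0 < s\<close> that assms(4) hc_alpha_pos[of s] by (simp add: \<delta>_def)
    then obtain F where F: "fst ` E \<subseteq> (\<Union>j. F j)" "(\<Sum>j. hc_term s (F j)) < \<delta>"
      using assms(2) hausdorff_content_less_imp_cover[of s "fst ` E" \<delta>] by (auto simp: s_def m_def)
    have "bounded (F j) \<and> diameter (F j) < R" for j
    proof (rule hc_term_less_imp_diameter_less[OF \<open>0 < s\<close> assms(4)])
      have "hc_term s (F j) < \<delta>" using F(2) ennreal_suminf_lessD by blast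
      also have "\<dots> \<le> hc_alpha s * (R / 2) powr s" by (intro ennreal_leI) (simp add: \<delta>_def)
      finally show "hc_term s (F j) < ennreal (hc_alpha s * (R / 2) powr s)" .
    qed
    then have "diameter (F j \<inter> fst ` E) \<le> R" for j
      by (meson diameter_subset inf_le1 less_imp_le order_trans)
    then have "hausdorff_content d E \<le> ennreal c * (\<Sum>j. hc_term s (F j))"
      using hausdorff_content_le_fst_cover[OF assms(3,4) F(1) _ assms(1)]
      by (simp add: c_def m_def s_def)
    also have "\<dots> \<le> ennreal c * ennreal (e / c)"
    proof (intro mult_left_mono order_trans[OF less_imp_le[OF F(2)]])
      show "ennreal \<delta> \<le> ennreal (e / c)" by (intro ennreal_leI) (simp add: \<delta>_def)
    qed simp
    also have "\<dots> = ennreal e"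
      using \<open>0 < c\<close> that by (simp flip: ennreal_mult)
    finally show ?thesis by simp
  qed
  then show ?thesis by (metis ennreal_le_epsilon le_zero_eq)
qed

lemma hausdorff_content_eq_0_if_fst:
  fixes E :: "('a::metric_space \<times> (real ^ 'm::finite)) set"
  assumes "real CARD('m) < d" "hausdorff_content (d - CARD('m)) (fst ` E) = 0"
  shows "hausdorff_content d E = 0"
proof -
  define slice where "slice k = E \<inter> {p. snd p \<in> cball 0 (Suc k)}" for k :: nat
  have "fst ` slice k \<subseteq> fst ` E" for k
    by (auto simp: slice_def)
  then have "hausdorff_content (d - CARD('m)) (fst ` slice k) = 0" for k
    using assms(2) by (metis hausdorff_content_mono le_zero_eq)
  then have "hausdorff_content d (slice k) = 0" for k
    using assms(1) by (intro hausdorff_content_eq_0_if_fst_cball[of d _ 0 "Suc k"]) (auto simp: slice_def)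
  moreover have "E \<subseteq> (\<Union>k. slice k)"
  proof
    fix p assume "p \<in> E"
    obtain k :: nat where "norm (snd p) \<le> k" using real_arch_simple by blast
    with \<open>p \<in> E\<close> show "p \<in> (\<Union>k. slice k)"
      by (auto simp: slice_def intro!: exI[of _ k])
  qed
  ultimately show ?thesis
    using hausdorff_content_countable_subadditive[of E slice d] by simp
qed

lemma hausdorff_content_le_ediam_pow_fst:
  fixes E :: "('a::metric_space \<times> (real ^ 'm::finite)) set"
  assumes "real CARD('m) < d"
  shows "hausdorff_content d E
    \<le> ennreal (projection_const d CARD('m)) * ediam E ^ CARD('m) * hausdorff_content (d - CARD('m)) (fst ` E)"
proof (cases "bounded E")
  case True
  have "ennreal (projection_const d CARD('m)) * ediam E ^ CARD('m)
      = ennreal (projection_const d CARD('m) * diameter E ^ CARD('m))"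
    using True diameter_ge_0[OF True] projection_const_pos[OF assms]
    by (simp add: ediam_def ennreal_mult ennreal_power)
  then show ?thesis
    using hausdorff_content_le_diameter_pow_fst[OF True assms] by simp
next
  case False
  then have "ennreal (projection_const d CARD('m)) * ediam E ^ CARD('m) = \<infinity>"
    using projection_const_pos[OF assms] by (simp add: ediam_def ennreal_mult_top)
  then show ?thesis
    using hausdorff_content_eq_0_if_fst[OF assms] by (cases "hausdorff_content (d - CARD('m)) (fst ` E) = 0") auto
qed

lemma hausdorff_content_CARD_le_ediam_pow_fst:
  fixes E :: "('a::metric_space \<times> (real ^ 'm::finite)) set"
  shows "hausdorff_content CARD('m) E
    \<le> ennreal (hc_alpha CARD('m) / 2 ^ CARD('m)) * ediam E ^ CARD('m) * hausdorff_content 0 (fst ` E)"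
proof (cases "E = {}")
  case False
  have "hausdorff_content CARD('m) E \<le> ennreal (hc_alpha CARD('m) / 2 ^ CARD('m)) * ediam E ^ CARD('m)"
    by (simp add: hausdorff_content_le_ediam_pow)
  also have "\<dots> \<le> ennreal (hc_alpha CARD('m) / 2 ^ CARD('m)) * ediam E ^ CARD('m)
      * hausdorff_content 0 (fst ` E)"
    using one_le_hausdorff_content_0[of "fst ` E"] False
    by (metis image_is_empty mult.right_neutral mult_left_mono zero_le)
  finally show ?thesis .
qed simp

theorem lemma4p1:
  fixes d :: real
  assumes "real CARD('m::finite) \<le> d"
      and "d \<le> real CARD('m) + real CARD('n::finite)"
  shows "\<exists>C::real. \<forall>E :: ((real ^ 'n) \<times> (real ^ 'm)) set.
           hausdorff_content d E
             \<le> ennreal C * ediam E ^ CARD('m) * hausdorff_content (d - real CARD('m)) (fst ` E)"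
proof (cases "d = real CARD('m)")
  case True
  then show ?thesis
    using hausdorff_content_CARD_le_ediam_pow_fst[where 'a = "real ^ 'n" and 'm = 'm]
    by (intro exI[of _ "hc_alpha CARD('m) / 2 ^ CARD('m)"]) simp
next
  case False
  with assms(1) have "real CARD('m) < d" by simp
  then show ?thesis
    using hausdorff_content_le_ediam_pow_fst by blast
qed

end
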